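(* Let $X \subset \mathbb{R}^n$ be a compact real algebraic set. Then the topological disjoint union $X \sqcup X$ is a boundary; that is, there exist a real algebraic set $W \subset \mathbb{R}^m$ (for some $m$) and a point $w \in W$ such that $X \sqcup X$ is homeomorphic to the link $\operatorname{lk}(w,W)$.
   Context: All algebraic sets are algebraic subsets of real affine space $\mathbb{R}^m$. For a semialgebraic set $W \subset \mathbb{R}^m$ and $w \in W$, let $S(w,\varepsilon)$ denote the sphere of radius $\varepsilon>0$ in $\mathbb{R}^m$ centered at $w$. By the local conic structure lemma, for all sufficiently small $\varepsilon>0$ the topological type of $S(w,\varepsilon)\cap W$ is independent of $\varepsilon$; this space is called the link of $w$ in $W$ and denoted $\operatorname{lk}(w,W)$. A compact real algebraic set $X$ is called a boundary if there exist a real algebraic set $W$ and a point $w\in W$ such that $X$ is homeomorphic to $\operatorname{lk}(w,W)$. *)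

theory Defs
  imports "HOL-Analysis.Analysis"
begin

text \<open>Real affine space R^n is represented by the points of type nat \<Rightarrow> real
  all of whose coordinates with index \<ge> n vanish.  On this set the (product)
  topology of nat \<Rightarrow> real restricts to the usual Euclidean topology.\<close>

definition Rspace :: "nat \<Rightarrow> (nat \<Rightarrow> real) set" where
  "Rspace n = {x. \<forall>i\<ge>n. x i = 0}"

inductive_set poly_fun :: "nat \<Rightarrow> ((nat \<Rightarrow> real) \<Rightarrow> real) set" for n :: nat where
  const: "(\<lambda>x. c) \<in> poly_fun n"
| var: "i < n \<Longrightarrow> (\<lambda>x. x i) \<in> poly_fun n"
| add: "p \<in> poly_fun n \<Longrightarrow> q \<in> poly_fun n \<Longrightarrow> (\<lambda>x. p x + q x) \<in> poly_fun n"
| mult: "p \<in> poly_fun n \<Longrightarrow> q \<in> poly_fun n \<Longrightarrow> (\<lambda>x. p x * q x) \<in> poly_fun n"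

definition algebraic_set :: "nat \<Rightarrow> (nat \<Rightarrow> real) set \<Rightarrow> bool" where
  "algebraic_set n S \<longleftrightarrow>
     (\<exists>F. finite F \<and> F \<subseteq> poly_fun n \<and> S = {x \<in> Rspace n. \<forall>f\<in>F. f x = 0})"

definition Rsphere :: "nat \<Rightarrow> (nat \<Rightarrow> real) \<Rightarrow> real \<Rightarrow> (nat \<Rightarrow> real) set" where
  "Rsphere n w e = {x \<in> Rspace n. (\<Sum>i<n. (x i - w i)^2) = e^2}"

definition homeomorphic_to_link ::
    "'a topology \<Rightarrow> nat \<Rightarrow> (nat \<Rightarrow> real) set \<Rightarrow> (nat \<Rightarrow> real) \<Rightarrow> bool" where
  "homeomorphic_to_link T m W w \<longleftrightarrow>
     (\<exists>e0>0. \<forall>e. 0 < e \<and> e < e0 \<longrightarrow>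
        T homeomorphic_space top_of_set (Rsphere m w e \<inter> W))"

definition double :: "(nat \<Rightarrow> real) set \<Rightarrow> (bool \<times> (nat \<Rightarrow> real)) topology" where
  "double X = sum_topology (\<lambda>_. top_of_set X) (UNIV :: bool set)"

end

theory Submission
  imports Defs
begin

text \<open>Inversion \<open>z \<mapsto> z / |z|\<^sup>2\<close> of \<open>R\<^sup>n\<^sup>+\<^sup>1\<close> sends the cylinder \<open>X \<times> R\<close> to a set whose union
  with the origin is algebraic: its equations arise from \<open>f(z / |z|\<^sup>2) = 0\<close>, \<open>f\<close> an equation
  of \<open>X\<close>, by clearing the denominators.  A small sphere of radius \<open>e\<close> about the origin is
  inverted onto the sphere of radius \<open>1/e\<close>, and since \<open>X\<close> is bounded this large sphere meets
  \<open>X \<times> R\<close> in two disjoint copies of \<open>X\<close>, one in each of the half-spaces \<open>z\<^sub>n > 0\<close> and \<open>z\<^sub>n < 0\<close>.\<close>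

definition sqnorm :: "nat \<Rightarrow> (nat \<Rightarrow> real) \<Rightarrow> real" where
  "sqnorm k z = (\<Sum>i<k. (z i)\<^sup>2)"

definition invert :: "nat \<Rightarrow> (nat \<Rightarrow> real) \<Rightarrow> nat \<Rightarrow> real" where
  "invert k z = (\<lambda>i. z i / sqnorm k z)"

definition truncate :: "nat \<Rightarrow> (nat \<Rightarrow> real) \<Rightarrow> nat \<Rightarrow> real" where
  "truncate n z = (\<lambda>i. if i < n then z i else 0)"

lemma sqnorm_Suc: "sqnorm (Suc k) z = sqnorm k z + (z k)\<^sup>2"
  by (simp add: sqnorm_def)

lemma sqnorm_eq_0_iff: "z \<in> Rspace k \<Longrightarrow> sqnorm k z = 0 \<longleftrightarrow> z = (\<lambda>_. 0)"
  unfolding sqnorm_def Rspace_def by (auto simp: sum_nonneg_eq_0_iff fun_eq_iff) (metis lessThan_iff not_le)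

lemma truncate_in_Rspace [simp]: "truncate n z \<in> Rspace n"
  by (simp add: truncate_def Rspace_def)

lemma poly_fun_cong:
  assumes "p \<in> poly_fun n" "\<And>i. i < n \<Longrightarrow> x i = y i"
  shows "p x = p y"
  using assms by (induction rule: poly_fun.induct) auto

lemma poly_fun_power: "p \<in> poly_fun k \<Longrightarrow> (\<lambda>z. p z ^ d) \<in> poly_fun k"
proof (induction d)
  case 0
  then show ?case using poly_fun.const[of 1] by simp
next
  case (Suc d)
  then show ?case using poly_fun.mult[of p k "\<lambda>z. p z ^ d"] by simp
qed

lemma sqnorm_poly_fun: "n \<le> k \<Longrightarrow> sqnorm n \<in> poly_fun k"
proof (induction n)
  case 0
  then show ?case using poly_fun.const[of 0] by (simp add: sqnorm_def)
next
  case (Suc n)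
  have "(\<lambda>z. sqnorm n z + z n * z n) \<in> poly_fun k"
    using Suc by (intro poly_fun.add poly_fun.mult poly_fun.var) auto
  then show ?case by (simp add: sqnorm_Suc power2_eq_square)
qed

lemma poly_fun_clear_denominators:
  assumes "p \<in> poly_fun n" "q \<in> poly_fun k" "n \<le> k"
  shows "\<exists>d P. P \<in> poly_fun k \<and> (\<forall>z. q z \<noteq> 0 \<longrightarrow> P z = q z ^ d * p (\<lambda>i. z i / q z))"
  using assms(1)
proof (induction rule: poly_fun.induct)
  case (const c)
  show ?case by (intro exI[of _ 0] exI[of _ "\<lambda>z. c"]) (simp add: poly_fun.const)
next
  case (var i)
  then show ?case using assms(3) by (intro exI[of _ 1] exI[of _ "\<lambda>z. z i"]) (simp add: poly_fun.var)
next
  case (add p1 p2)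
  then obtain d1 P1 d2 P2 where
      P1: "P1 \<in> poly_fun k" "\<forall>z. q z \<noteq> 0 \<longrightarrow> P1 z = q z ^ d1 * p1 (\<lambda>i. z i / q z)" and
      P2: "P2 \<in> poly_fun k" "\<forall>z. q z \<noteq> 0 \<longrightarrow> P2 z = q z ^ d2 * p2 (\<lambda>i. z i / q z)"
    by blast
  have "(\<lambda>z. q z ^ d2 * P1 z + q z ^ d1 * P2 z) \<in> poly_fun k"
    by (intro poly_fun.add poly_fun.mult poly_fun_power assms(2) P1 P2)
  moreover have "\<forall>z. q z \<noteq> 0 \<longrightarrow> q z ^ d2 * P1 z + q z ^ d1 * P2 z =
      q z ^ (d1 + d2) * (p1 (\<lambda>i. z i / q z) + p2 (\<lambda>i. z i / q z))"
    using P1(2) P2(2) by (simp add: power_add algebra_simps)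
  ultimately show ?case by blast
next
  case (mult p1 p2)
  then obtain d1 P1 d2 P2 where
      P1: "P1 \<in> poly_fun k" "\<forall>z. q z \<noteq> 0 \<longrightarrow> P1 z = q z ^ d1 * p1 (\<lambda>i. z i / q z)" and
      P2: "P2 \<in> poly_fun k" "\<forall>z. q z \<noteq> 0 \<longrightarrow> P2 z = q z ^ d2 * p2 (\<lambda>i. z i / q z)"
    by blast
  have "(\<lambda>z. P1 z * P2 z) \<in> poly_fun k"
    by (intro poly_fun.mult P1 P2)
  moreover have "\<forall>z. q z \<noteq> 0 \<longrightarrow> P1 z * P2 z =
      q z ^ (d1 + d2) * (p1 (\<lambda>i. z i / q z) * p2 (\<lambda>i. z i / q z))"
    using P1(2) P2(2) by (simp add: power_add algebra_simps)
  ultimately show ?case by blast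
qed

lemma algebraic_set_inverted_cylinder:
  assumes "algebraic_set n X"
  shows "algebraic_set (Suc n) {z \<in> Rspace (Suc n). z = (\<lambda>_. 0) \<or> truncate n (invert (Suc n) z) \<in> X}"
proof -
  obtain F where F: "finite F" "F \<subseteq> poly_fun n" and X: "X = {x \<in> Rspace n. \<forall>f\<in>F. f x = 0}"
    using assms unfolding algebraic_set_def by blast
  obtain d P where P: "\<And>f. f \<in> F \<Longrightarrow> P f \<in> poly_fun (Suc n) \<and> (\<forall>z. sqnorm (Suc n) z \<noteq> 0 \<longrightarrow>
      P f z = sqnorm (Suc n) z ^ d f * f (invert (Suc n) z))"
    using poly_fun_clear_denominators[OF _ sqnorm_poly_fun, of _ n "Suc n" "Suc n"] F(2)
    unfolding invert_def by (metis order.refl le_SucI subsetD)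
  \<comment> \<open>The extra factor \<open>|z|\<^sup>2\<close> makes every equation vanish at the origin, even when \<open>d f = 0\<close>.\<close>
  define G where "G = (\<lambda>f z. sqnorm (Suc n) z * P f z) ` F"
  have "z = (\<lambda>_. 0) \<or> truncate n (invert (Suc n) z) \<in> X \<longleftrightarrow> (\<forall>g\<in>G. g z = 0)"
    if z: "z \<in> Rspace (Suc n)" for z
  proof (cases "z = (\<lambda>_. 0)")
    case False
    then have "sqnorm (Suc n) z \<noteq> 0"
      using sqnorm_eq_0_iff[OF z] by simp
    moreover have cong: "f (truncate n (invert (Suc n) z)) = f (invert (Suc n) z)" if "f \<in> F" for f
      using F(2) that by (intro poly_fun_cong[of f n]) (auto simp: truncate_def)
    ultimately have "sqnorm (Suc n) z * P f z = 0 \<longleftrightarrow> f (truncate n (invert (Suc n) z)) = 0"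
      if "f \<in> F" for f
      using P[OF that] cong[OF that] by simp
    then show ?thesis
      using False by (auto simp: G_def X)
  qed (simp add: G_def sqnorm_def)
  moreover have "G \<subseteq> poly_fun (Suc n)"
    using P by (auto simp: G_def intro!: poly_fun.mult sqnorm_poly_fun)
  ultimately show ?thesis
    unfolding algebraic_set_def using F(1) by (intro exI[of _ G]) (auto simp: G_def)
qed

lemma continuous_on_coordinate [continuous_intros]: "continuous_on S (\<lambda>x::nat \<Rightarrow> real. x i)"
  by (rule continuous_on_product_then_coordinatewise[OF continuous_on_id])

lemma continuous_map_sum_topologyI:
  assumes "\<And>i. i \<in> I \<Longrightarrow> continuous_map (X i) Y (\<lambda>x. f (i, x))"
  shows "continuous_map (sum_topology X I) Y f"
  unfolding continuous_map_def
proof (intro conjI allI impI)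
  show "f \<in> topspace (sum_topology X I) \<rightarrow> topspace Y"
    using assms by (fastforce simp: continuous_map_def Pi_iff)
next
  fix U assume U: "openin Y U"
  show "openin (sum_topology X I) {x \<in> topspace (sum_topology X I). f x \<in> U}"
    unfolding openin_sum_topology
  proof (intro conjI ballI)
    fix i assume i: "i \<in> I"
    have "{x. (i, x) \<in> {x \<in> topspace (sum_topology X I). f x \<in> U}} =
          {x \<in> topspace (X i). f (i, x) \<in> U}"
      using i by auto
    then show "openin (X i) {x. (i, x) \<in> {x \<in> topspace (sum_topology X I). f x \<in> U}}"
      using assms[OF i] U by (simp add: continuous_map_def)
  qed auto
qed

lemma compact_space_sum_topology:
  assumes "finite I" "\<And>i. i \<in> I \<Longrightarrow> compact_space (X i)"
  shows "compact_space (sum_topology X I)"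
proof -
  have "topspace (sum_topology X I) = \<Union>((\<lambda>i. Pair i ` topspace (X i)) ` I)"
    by auto
  moreover have "compactin (sum_topology X I) (Pair i ` topspace (X i))" if "i \<in> I" for i
    using image_compactin[OF _ continuous_map_component_injection[OF that]] that assms(2)
    unfolding compact_space_def by blast
  ultimately show ?thesis
    unfolding compact_space_def using assms(1) by (auto intro: compactin_Union)
qed

text \<open>The point \<open>e\<^sup>2 x \<plusminus> t e\<^sub>n\<close> of the sphere of radius \<open>e\<close> whose inversion lies over \<open>x\<close>;
  \<open>|e\<^sup>2 x|\<^sup>2 + t\<^sup>2 = e\<^sup>2\<close> forces \<open>t = e \<surd>(1 - e\<^sup>2 |x|\<^sup>2)\<close>.\<close>

definition sphere_sheet :: "nat \<Rightarrow> real \<Rightarrow> bool \<Rightarrow> (nat \<Rightarrow> real) \<Rightarrow> nat \<Rightarrow> real" where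
  "sphere_sheet n e b x = (\<lambda>i. if i < n then e\<^sup>2 * x i
     else if i = n then (if b then 1 else -1) * e * sqrt (1 - e\<^sup>2 * sqnorm n x) else 0)"

lemma sphere_sheet_in_Rspace: "sphere_sheet n e b x \<in> Rspace (Suc n)"
  by (simp add: sphere_sheet_def Rspace_def)

lemma sqnorm_sphere_sheet:
  assumes "e\<^sup>2 * sqnorm n x \<le> 1"
  shows "sqnorm (Suc n) (sphere_sheet n e b x) = e\<^sup>2"
proof -
  have "sqnorm n (sphere_sheet n e b x) = e ^ 4 * sqnorm n x"
    unfolding sqnorm_def sphere_sheet_def
    by (simp add: sum_distrib_left power_mult_distrib flip: power_mult)
  then show ?thesis
    using assms unfolding sqnorm_Suc
    by (simp add: sphere_sheet_def power_mult_distrib algebra_simps power2_eq_square power4_eq_xxxx)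
qed

lemma invert_sphere_sheet:
  assumes "x \<in> Rspace n" "e > 0" "e\<^sup>2 * sqnorm n x \<le> 1"
  shows "truncate n (invert (Suc n) (sphere_sheet n e b x)) = x"
  using assms sqnorm_sphere_sheet[OF assms(3)]
  by (auto simp: invert_def truncate_def sphere_sheet_def Rspace_def fun_eq_iff)

lemma sphere_sheet_truncate_invert:
  assumes "z \<in> Rspace (Suc n)" "sqnorm (Suc n) z = e\<^sup>2" "e > 0"
  shows "z = sphere_sheet n e (z n > 0) (truncate n (invert (Suc n) z))"
proof -
  let ?x = "truncate n (invert (Suc n) z)"
  have "sqnorm n ?x = sqnorm n z / e ^ 4"
    using assms(2) unfolding sqnorm_def truncate_def invert_def
    by (simp add: sum_divide_distrib power_divide flip: power_mult)
  then have "1 - e\<^sup>2 * sqnorm n ?x = (z n)\<^sup>2 / e\<^sup>2"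
    using assms(2,3) unfolding sqnorm_Suc
    by (simp add: field_simps power2_eq_square power4_eq_xxxx)
  then have "e * sqrt (1 - e\<^sup>2 * sqnorm n ?x) = \<bar>z n\<bar>"
    using assms(3) by (simp add: real_sqrt_divide)
  then show ?thesis
    using assms by (auto simp: sphere_sheet_def truncate_def invert_def Rspace_def fun_eq_iff)
qed

lemma sphere_sheet_inject:
  assumes "x \<in> Rspace n" "y \<in> Rspace n" "e > 0" "e\<^sup>2 * sqnorm n x < 1" "e\<^sup>2 * sqnorm n y < 1"
    and "sphere_sheet n e b x = sphere_sheet n e c y"
  shows "b = c \<and> x = y"
proof -
  have "x = y"
    using assms invert_sphere_sheet[of x n e b] invert_sphere_sheet[of y n e c] by simp
  moreover have "e * sqrt (1 - e\<^sup>2 * sqnorm n x) > 0"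
    using assms(3,4) by simp
  moreover have "sphere_sheet n e b x n = sphere_sheet n e c x n"
    using assms(6) \<open>x = y\<close> by simp
  ultimately show ?thesis by (cases b; cases c) (auto simp: sphere_sheet_def)
qed

lemma continuous_on_sphere_sheet: "continuous_on S (sphere_sheet n e b)"
proof (intro continuous_on_coordinatewise_then_product)
  fix i
  show "continuous_on S (\<lambda>x. sphere_sheet n e b x i)"
    unfolding sphere_sheet_def sqnorm_def
    by (cases "i < n"; cases "i = n") (auto intro!: continuous_intros)
qed

lemma double_homeomorphic_sphere_slice:
  assumes "compact X" "X \<subseteq> Rspace n" "e > 0" "\<And>x. x \<in> X \<Longrightarrow> e\<^sup>2 * sqnorm n x < 1"
  shows "double X homeomorphic_space
    top_of_set {z \<in> Rspace (Suc n). sqnorm (Suc n) z = e\<^sup>2 \<and> truncate n (invert (Suc n) z) \<in> X}"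
    (is "_ homeomorphic_space top_of_set ?S")
proof -
  let ?h = "\<lambda>(b, x). sphere_sheet n e b x"
  have top: "topspace (double X) = UNIV \<times> X"
    by (auto simp: double_def)
  have sheet_in_S: "sphere_sheet n e b x \<in> ?S" if "x \<in> X" for b x
  proof -
    have "x \<in> Rspace n" "e\<^sup>2 * sqnorm n x \<le> 1"
      using that assms(2,4) less_imp_le by auto
    then show ?thesis
      using that assms(3) sphere_sheet_in_Rspace sqnorm_sphere_sheet invert_sphere_sheet by simp
  qed
  have "continuous_map (double X) (top_of_set ?S) ?h"
    unfolding double_def using sheet_in_S continuous_on_sphere_sheet
    by (intro continuous_map_sum_topologyI)
       (auto simp: continuous_map_in_subtopology continuous_map_iff_continuous)
  moreover have "compact_space (double X)"
    unfolding double_def using assms(1)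
    by (intro compact_space_sum_topology) (auto simp: compact_space_subtopology compactin_euclidean_iff)
  moreover have "?h ` topspace (double X) = topspace (top_of_set ?S)"
  proof
    show "?h ` topspace (double X) \<subseteq> topspace (top_of_set ?S)"
      using top sheet_in_S by auto
    show "topspace (top_of_set ?S) \<subseteq> ?h ` topspace (double X)"
    proof
      fix z assume "z \<in> topspace (top_of_set ?S)"
      then have "z = ?h (z n > 0, truncate n (invert (Suc n) z))" "truncate n (invert (Suc n) z) \<in> X"
        using sphere_sheet_truncate_invert[OF _ _ assms(3)] by auto
      then show "z \<in> ?h ` topspace (double X)"
        unfolding top by blast
    qed
  qed
  moreover have "inj_on ?h (topspace (double X))"
  proof
    fix p q assume "p \<in> topspace (double X)" "q \<in> topspace (double X)" "?h p = ?h q"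
    moreover obtain b x c y where "p = (b, x)" "q = (c, y)"
      by (cases p, cases q)
    ultimately show "p = q"
      using top assms(2,4) sphere_sheet_inject[of x n y e b c, OF _ _ assms(3)] by auto
  qed
  ultimately have "homeomorphic_map (double X) (top_of_set ?S) ?h"
    by (intro continuous_imp_homeomorphic_map) (auto simp: Hausdorff_space_subtopology)
  then show ?thesis
    using homeomorphic_map_imp_homeomorphic_space by blast
qed

lemma link_of_inverted_cylinder:
  assumes "compact X" "X \<subseteq> Rspace n"
  shows "homeomorphic_to_link (double X) (Suc n)
    {z \<in> Rspace (Suc n). z = (\<lambda>_. 0) \<or> truncate n (invert (Suc n) z) \<in> X} (\<lambda>_. 0)"
    (is "homeomorphic_to_link _ _ ?W _")
proof -
  have "bounded (sqnorm n ` X)"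
    using assms(1) unfolding sqnorm_def
    by (intro compact_imp_bounded compact_continuous_image continuous_intros)
  then obtain B where B: "B > 0" "\<And>x. x \<in> X \<Longrightarrow> \<bar>sqnorm n x\<bar> \<le> B"
    unfolding bounded_pos by auto
  have "double X homeomorphic_space top_of_set (Rsphere (Suc n) (\<lambda>_. 0) e \<inter> ?W)"
    if e: "0 < e" "e < 1 / sqrt B" for e
  proof -
    have "e * sqrt B < 1"
      using e B(1) by (simp add: less_divide_eq)
    then have "(e * sqrt B)\<^sup>2 < 1"
      using e B(1) by (simp add: abs_square_less_1)
    then have "e\<^sup>2 * B < 1"
      using B(1) by (simp add: power_mult_distrib)
    then have "e\<^sup>2 * sqnorm n x < 1" if "x \<in> X" for x
      using mult_left_mono[OF abs_le_D1[OF B(2)[OF that]], of "e\<^sup>2"] by simp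
    moreover have "Rsphere (Suc n) (\<lambda>_. 0) e \<inter> ?W =
        {z \<in> Rspace (Suc n). sqnorm (Suc n) z = e\<^sup>2 \<and> truncate n (invert (Suc n) z) \<in> X}"
      using e(1) by (auto simp: Rsphere_def sqnorm_def)
    ultimately show ?thesis
      using double_homeomorphic_sphere_slice[OF assms e(1)] by simp
  qed
  then show ?thesis
    unfolding homeomorphic_to_link_def using B(1) by (intro exI[of _ "1 / sqrt B"]) auto
qed

theorem proposition4p1:
  fixes n :: nat and X :: "(nat \<Rightarrow> real) set"
  assumes "algebraic_set n X" and "compact X"
  shows "\<exists>m W w. algebraic_set m W \<and> w \<in> W \<and> homeomorphic_to_link (double X) m W w"
proof -
  let ?W = "{z \<in> Rspace (Suc n). z = (\<lambda>_. 0) \<or> truncate n (invert (Suc n) z) \<in> X}"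
  have "X \<subseteq> Rspace n"
    using assms(1) by (auto simp: algebraic_set_def)
  then have "homeomorphic_to_link (double X) (Suc n) ?W (\<lambda>_. 0)"
    using link_of_inverted_cylinder[OF assms(2)] by blast
  moreover have "(\<lambda>_. 0) \<in> ?W"
    by (simp add: Rspace_def)
  ultimately show ?thesis
    using algebraic_set_inverted_cylinder[OF assms(1)] by blast
qed

end
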